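(* Let $G$ be an admissible graph, let $T$ be the adjacency matrix of its oriented line graph, let $\lambda>0$ be the largest eigenvalue of $T$, and let $\zeta_G(x)=\exp\left(\sum_{k=1}^\infty \frac{\operatorname{tr}(T^k)}{k}x^k\right)$ for $x\in[0,\frac{1}{\lambda})$. Fix $a$ with $0<a<\frac{1}{\lambda}$ and define $s:[0,1]\to\mathbb{R}$ by $$s(p)=p\cdot\frac{\zeta_G(a)+1-\left(\zeta_G(ap)+p\right)}{1+a\zeta_G'(a)}.$$ Then $s$ has a global maximum in $(0,1)$; that is, there exists $c\in(0,1)$ with $s(c)\ge s(p)$ for all $p\in[0,1]$.
   Context: An admissible graph is a simple, finite, connected, undirected graph with no vertex of degree one which is neither a cycle graph nor a path graph. If $G$ has $m$ edges, let $\mathcal{E}=\{e^{(1)},\dots,e^{(2m)}\}$ be the set of its $2m$ oriented edges (each undirected edge $\{u,v\}$ gives the two directed edges $(u,v)$ and $(v,u)$; for $e=(u,v)$ write $i(e)=u$, $t(e)=v$). The oriented line graph $\overline{G}$ has vertex set $\mathcal{E}$ and a directed edge from $e$ to $f$ iff $t(e)=i(f)$ and $i(e)\neq t(f)$. $T$ is the $2m\times 2m$ $0/1$ adjacency matrix of $\overline{G}$. The function $\zeta_G$ is the Ihara zeta function of $G$ restricted to the real interval $[0,1/\lambda)$, where the defining series converges; $\zeta_G'$ is its derivative. *)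

theory Defs
  imports "HOL-Analysis.Analysis"
begin

(* A simple undirected graph is given by a vertex set V and a symmetric,
   irreflexive edge relation E (a set of ordered pairs, containing both
   orientations of each undirected edge).  Hence E itself is exactly the set
   of oriented edges, and card E = 2m. *)

definition simple_graph :: "'a set \<Rightarrow> ('a \<times> 'a) set \<Rightarrow> bool" where
  "simple_graph V E \<longleftrightarrow> finite V \<and> E \<subseteq> V \<times> V \<and> sym E \<and> (\<forall>v. (v, v) \<notin> E)"

definition graph_connected :: "'a set \<Rightarrow> ('a \<times> 'a) set \<Rightarrow> bool" where
  "graph_connected V E \<longleftrightarrow> V \<noteq> {} \<and> (\<forall>u\<in>V. \<forall>v\<in>V. (u, v) \<in> E\<^sup>*)"

definition degree :: "('a \<times> 'a) set \<Rightarrow> 'a \<Rightarrow> nat" where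
  "degree E v = card {w. (v, w) \<in> E}"

definition path_edges :: "'a list \<Rightarrow> ('a \<times> 'a) set" where
  "path_edges xs = {(xs ! i, xs ! Suc i) | i. Suc i < length xs}
                   \<union> {(xs ! Suc i, xs ! i) | i. Suc i < length xs}"

definition is_path_graph :: "'a set \<Rightarrow> ('a \<times> 'a) set \<Rightarrow> bool" where
  "is_path_graph V E \<longleftrightarrow> (\<exists>xs. distinct xs \<and> set xs = V \<and> xs \<noteq> [] \<and> E = path_edges xs)"

definition is_cycle_graph :: "'a set \<Rightarrow> ('a \<times> 'a) set \<Rightarrow> bool" where
  "is_cycle_graph V E \<longleftrightarrow> (\<exists>xs. distinct xs \<and> set xs = V \<and> length xs \<ge> 3 \<and>
      E = path_edges xs \<union> {(last xs, hd xs), (hd xs, last xs)})"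

definition admissible :: "'a set \<Rightarrow> ('a \<times> 'a) set \<Rightarrow> bool" where
  "admissible V E \<longleftrightarrow> simple_graph V E \<and> graph_connected V E \<and>
     (\<forall>v\<in>V. degree E v \<noteq> 1) \<and> \<not> is_cycle_graph V E \<and> \<not> is_path_graph V E"

definition olg_T :: "('a \<times> 'a) \<Rightarrow> ('a \<times> 'a) \<Rightarrow> real" where
  "olg_T e f = (if snd e = fst f \<and> fst e \<noteq> snd f then 1 else 0)"

fun olg_Tpow :: "('a \<times> 'a) set \<Rightarrow> nat \<Rightarrow> ('a \<times> 'a) \<Rightarrow> ('a \<times> 'a) \<Rightarrow> real" where
  "olg_Tpow E 0 e f = (if e = f then 1 else 0)"
| "olg_Tpow E (Suc k) e f = (\<Sum>g\<in>E. olg_T e g * olg_Tpow E k g f)"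

definition trace_Tpow :: "('a \<times> 'a) set \<Rightarrow> nat \<Rightarrow> real" where
  "trace_Tpow E k = (\<Sum>e\<in>E. olg_Tpow E k e e)"

definition T_eigenvalue :: "('a \<times> 'a) set \<Rightarrow> complex \<Rightarrow> bool" where
  "T_eigenvalue E \<mu> \<longleftrightarrow> (\<exists>v :: ('a \<times> 'a) \<Rightarrow> complex. (\<exists>e\<in>E. v e \<noteq> 0) \<and>
      (\<forall>e\<in>E. (\<Sum>f\<in>E. of_real (olg_T e f) * v f) = \<mu> * v e))"

definition largest_eigenvalue :: "('a \<times> 'a) set \<Rightarrow> real \<Rightarrow> bool" where
  "largest_eigenvalue E lam \<longleftrightarrow> T_eigenvalue E (of_real lam) \<and>
      (\<forall>\<mu>::real. T_eigenvalue E (of_real \<mu>) \<longrightarrow> \<mu> \<le> lam)"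

definition ihara_zeta :: "('a \<times> 'a) set \<Rightarrow> real \<Rightarrow> real" where
  "ihara_zeta E x = exp (\<Sum>k. trace_Tpow E (Suc k) / real (Suc k) * x ^ Suc k)"

end

theory Submission
  imports Defs "Jordan_Normal_Form.Determinant"
begin

text \<open>The function s vanishes at 0 and 1, is positive at 1/2 because the zeta function is
increasing on [0, a], has denominator at least 1 because zeta' is nonnegative there, and is
continuous on [0, 1]; so it attains its maximum over [0, 1] in the interior.

All three analytic facts follow from writing zeta as the exponential of a power series with
nonnegative coefficients tr(T^k)/k that still converges slightly beyond a. That convergence is a
Pringsheim-type statement for the nonnegative matrix T: the set of t \<ge> 0 for which the Neumann
series \<Sum> t^k T^k 1 converges is an interval, open in [0, \<infinity>), and its finite endpoint t0 must
make I - t0 T singular; then 1/t0 is a real eigenvalue of T, so 1/t0 \<le> \<lambda>.\<close>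

definition mat_vec :: "'b set \<Rightarrow> ('b \<Rightarrow> 'b \<Rightarrow> real) \<Rightarrow> ('b \<Rightarrow> real) \<Rightarrow> 'b \<Rightarrow> real" where
  "mat_vec E M v e = (\<Sum>f\<in>E. M e f * v f)"

lemma mat_vec_scale: "mat_vec E M (\<lambda>f. c * v f) e = c * mat_vec E M v e"
  by (simp add: mat_vec_def sum_distrib_left algebra_simps)

lemma mat_vec_id_minus:
  assumes "finite E" and "e \<in> E"
  shows "mat_vec E (\<lambda>e f. (if e = f then 1 else 0) - t * M e f) v e = v e - t * mat_vec E M v e"
proof -
  have "(\<Sum>f\<in>E. (if e = f then 1 else 0) * v f) = (\<Sum>f\<in>E. if e = f then v f else 0)"
    by (intro sum.cong) auto
  then show ?thesis
    using assms by (simp add: mat_vec_def left_diff_distrib sum_subtractf sum_distrib_left mult.assoc)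
qed

lemma left_inverse_mat_vec:
  assumes "finite E" and "e \<in> E"
    and inv: "\<forall>e\<in>E. \<forall>g\<in>E. (\<Sum>f\<in>E. B e f * A f g) = (if e = g then 1 else 0)"
  shows "(\<Sum>f\<in>E. B e f * mat_vec E A v f) = v e"
proof -
  have "(\<Sum>f\<in>E. B e f * mat_vec E A v f) = (\<Sum>g\<in>E. (\<Sum>f\<in>E. B e f * A f g) * v g)"
    unfolding mat_vec_def sum_distrib_left sum_distrib_right
    by (subst sum.swap) (simp add: mult.assoc)
  also have "\<dots> = (\<Sum>g\<in>E. (if e = g then v g else 0))"
    using inv \<open>e \<in> E\<close> by (intro sum.cong) auto
  finally show ?thesis
    using assms(1,2) by simp
qed

lemma sum_distinct_conv_nth:
  "distinct xs \<Longrightarrow> (\<Sum>f\<in>set xs. h f) = (\<Sum>j = 0..<length xs. h (xs ! j))"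
  by (simp add: sum.distinct_set_conv_list sum_list_sum_nth)

lemma inv_into_nth:
  assumes "distinct xs" and "j < length xs"
  shows "inv_into {0..<length xs} (nth xs) (xs ! j) = j"
  using bij_betw_inv_into_left[OF bij_betw_nth[OF assms(1) atLeast0LessThan refl]] assms(2) by simp

lemma det_enumerated_matrix_nonzero:
  fixes A :: "'b \<Rightarrow> 'b \<Rightarrow> real"
  assumes "distinct xs"
    and inj: "\<And>v. \<forall>e\<in>set xs. mat_vec (set xs) A v e = 0 \<Longrightarrow> \<forall>e\<in>set xs. v e = 0"
  defines "n \<equiv> length xs"
  shows "det (mat n n (\<lambda>(i, j). A (xs ! i) (xs ! j))) \<noteq> 0"
proof
  let ?ix = "inv_into {0..<n} (nth xs)"
  let ?A = "mat n n (\<lambda>(i, j). A (xs ! i) (xs ! j))"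
  assume "det ?A = 0"
  then obtain u where u: "u \<in> carrier_vec n" "u \<noteq> 0\<^sub>v n" "?A *\<^sub>v u = 0\<^sub>v n"
    using det_0_iff_vec_prod_zero[of ?A n] by auto
  have "\<forall>e\<in>set xs. mat_vec (set xs) A (\<lambda>f. u $ ?ix f) e = 0"
  proof
    fix e assume "e \<in> set xs"
    then obtain i where i: "i < n" "e = xs ! i"
      by (metis in_set_conv_nth n_def)
    have "mat_vec (set xs) A (\<lambda>f. u $ ?ix f) e = (?A *\<^sub>v u) $ i"
      using i u(1) assms(1)
      by (simp add: mat_vec_def sum_distinct_conv_nth inv_into_nth n_def mult_mat_vec_def
          scalar_prod_def)
    then show "mat_vec (set xs) A (\<lambda>f. u $ ?ix f) e = 0"
      using u(3) i by simp
  qed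
  then have u_ix: "\<forall>e\<in>set xs. u $ ?ix e = 0"
    by (rule inj)
  have "u = 0\<^sub>v n"
  proof (rule eq_vecI)
    fix i assume "i < dim_vec (0\<^sub>v n)"
    then have "i < n"
      by simp
    then show "u $ i = 0\<^sub>v n $ i"
      using u_ix[rule_format, of "xs ! i"] inv_into_nth[OF assms(1), of i] by (simp add: n_def)
  qed (use u(1) in simp)
  with u(2) show False
    by simp
qed

lemma finite_matrix_left_inverse:
  fixes A :: "'b \<Rightarrow> 'b \<Rightarrow> real"
  assumes "finite E"
    and inj: "\<And>v. \<forall>e\<in>E. mat_vec E A v e = 0 \<Longrightarrow> \<forall>e\<in>E. v e = 0"
  shows "\<exists>B. \<forall>e\<in>E. \<forall>g\<in>E. (\<Sum>f\<in>E. B e f * A f g) = (if e = g then 1 else 0)"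
proof -
  obtain xs where xs: "distinct xs" "set xs = E"
    using finite_distinct_list[OF \<open>finite E\<close>] by blast
  define n where "n = length xs"
  define Am where "Am = mat n n (\<lambda>(i, j). A (xs ! i) (xs ! j))"
  have "Am \<in> carrier_mat n n" "det Am \<noteq> 0"
    using det_enumerated_matrix_nonzero[OF xs(1)] inj xs(2) by (simp_all add: Am_def n_def)
  then have "Am \<in> Units (ring_mat TYPE(real) n ())"
    by (rule det_non_zero_imp_unit)
  then obtain Bm where Bm: "Bm \<in> carrier_mat n n" "Bm * Am = 1\<^sub>m n"
    unfolding Units_def ring_mat_def by auto
  let ?ix = "inv_into {0..<n} (nth xs)"
  show ?thesis
  proof (intro exI ballI)
    fix e g assume "e \<in> E" "g \<in> E"
    then obtain i k where i: "i < n" "e = xs ! i" and k: "k < n" "g = xs ! k"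
      using xs(2) by (metis in_set_conv_nth n_def)
    have "(\<Sum>f\<in>E. Bm $$ (?ix e, ?ix f) * A f g) = (Bm * Am) $$ (i, k)"
      using i k Bm(1) xs(1) unfolding xs(2)[symmetric]
      by (simp add: sum_distinct_conv_nth inv_into_nth n_def Am_def scalar_prod_def)
    also have "\<dots> = (if e = g then 1 else 0)"
      using Bm(2) i k xs by (simp add: nth_eq_iff_index_eq n_def)
    finally show "(\<Sum>f\<in>E. Bm $$ (?ix e, ?ix f) * A f g) = (if e = g then 1 else 0)" .
  qed
qed

locale nonneg_matrix =
  fixes E :: "'b set" and M :: "'b \<Rightarrow> 'b \<Rightarrow> real"
  assumes finite_index: "finite E" and nonneg_entries: "0 \<le> M e f"
begin

definition pow_ones :: "nat \<Rightarrow> 'b \<Rightarrow> real" where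
  "pow_ones k = (mat_vec E M ^^ k) (\<lambda>_. 1)"

definition neumann_sum :: "real \<Rightarrow> 'b \<Rightarrow> real" where
  "neumann_sum t e = (\<Sum>k. t ^ k * pow_ones k e)"

definition neumann_set :: "real set" where
  "neumann_set = {t. 0 \<le> t \<and> (\<forall>e\<in>E. summable (\<lambda>k. t ^ k * pow_ones k e))}"

lemma pow_ones_0 [simp]: "pow_ones 0 e = 1"
  by (simp add: pow_ones_def)

lemma pow_ones_Suc: "pow_ones (Suc k) = mat_vec E M (pow_ones k)"
  by (simp add: pow_ones_def)

lemma mat_vec_nonneg: "(\<And>f. f \<in> E \<Longrightarrow> 0 \<le> v f) \<Longrightarrow> 0 \<le> mat_vec E M v e"
  unfolding mat_vec_def by (intro sum_nonneg mult_nonneg_nonneg nonneg_entries) auto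

lemma mat_vec_mono: "(\<And>f. f \<in> E \<Longrightarrow> v f \<le> w f) \<Longrightarrow> mat_vec E M v e \<le> mat_vec E M w e"
  unfolding mat_vec_def by (intro sum_mono mult_left_mono nonneg_entries) auto

lemma pow_ones_nonneg: "0 \<le> pow_ones k e"
  by (induction k arbitrary: e) (auto simp: pow_ones_Suc intro: mat_vec_nonneg)

lemma summable_neumann: "t \<in> neumann_set \<Longrightarrow> e \<in> E \<Longrightarrow> summable (\<lambda>k. t ^ k * pow_ones k e)"
  by (simp add: neumann_set_def)

lemma neumann_sum_nonneg: "t \<in> neumann_set \<Longrightarrow> e \<in> E \<Longrightarrow> 0 \<le> neumann_sum t e"
  unfolding neumann_sum_def
  by (intro suminf_nonneg summable_neumann mult_nonneg_nonneg pow_ones_nonneg)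
    (auto simp: neumann_set_def)

lemma pow_ones_geometric_bound:
  assumes v: "\<And>e. e \<in> E \<Longrightarrow> 1 \<le> v e" and "0 \<le> t" "0 \<le> q"
    and sub: "\<And>e. e \<in> E \<Longrightarrow> t * mat_vec E M v e \<le> q * v e"
    and "e \<in> E"
  shows "t ^ k * pow_ones k e \<le> q ^ k * v e"
  using \<open>e \<in> E\<close>
proof (induction k arbitrary: e)
  case 0
  then show ?case using v by simp
next
  case (Suc k)
  have "t ^ Suc k * pow_ones (Suc k) e = t * mat_vec E M (\<lambda>g. t ^ k * pow_ones k g) e"
    by (simp add: pow_ones_Suc mat_vec_scale)
  also have "\<dots> \<le> t * mat_vec E M (\<lambda>g. q ^ k * v g) e"
    using Suc.IH \<open>0 \<le> t\<close> by (intro mult_left_mono mat_vec_mono) auto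
  also have "\<dots> = q ^ k * (t * mat_vec E M v e)"
    by (simp add: mat_vec_scale)
  also have "\<dots> \<le> q ^ Suc k * v e"
    using mult_left_mono[OF sub[OF Suc.prems] zero_le_power[OF \<open>0 \<le> q\<close>]]
    by (simp add: ac_simps)
  finally show ?case .
qed

lemma neumann_setI:
  assumes "\<And>e. e \<in> E \<Longrightarrow> 1 \<le> v e" and "0 \<le> t" "0 \<le> q" "q < 1"
    and "\<And>e. e \<in> E \<Longrightarrow> t * mat_vec E M v e \<le> q * v e"
  shows "t \<in> neumann_set"
  unfolding neumann_set_def
proof (intro CollectI conjI ballI \<open>0 \<le> t\<close>)
  fix e assume "e \<in> E"
  show "summable (\<lambda>k. t ^ k * pow_ones k e)"
  proof (rule summable_comparison_test)
    show "\<exists>N. \<forall>k\<ge>N. norm (t ^ k * pow_ones k e) \<le> v e * q ^ k"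
      using pow_ones_geometric_bound[OF assms(1-3,5) \<open>e \<in> E\<close>] \<open>0 \<le> t\<close>
      by (auto simp: pow_ones_nonneg mult.commute)
    show "summable (\<lambda>k. v e * q ^ k)"
      using assms(3,4) by (intro summable_mult summable_geometric) auto
  qed
qed

lemma neumann_set_downward:
  assumes "t \<in> neumann_set" and "0 \<le> s" "s \<le> t"
  shows "s \<in> neumann_set"
  unfolding neumann_set_def
proof (intro CollectI conjI ballI \<open>0 \<le> s\<close>)
  fix e assume "e \<in> E"
  show "summable (\<lambda>k. s ^ k * pow_ones k e)"
  proof (rule summable_comparison_test)
    show "\<exists>N. \<forall>k\<ge>N. norm (s ^ k * pow_ones k e) \<le> t ^ k * pow_ones k e"
      using assms(2,3) by (auto simp: pow_ones_nonneg intro!: mult_right_mono power_mono)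
    show "summable (\<lambda>k. t ^ k * pow_ones k e)"
      using assms(1) \<open>e \<in> E\<close> by (rule summable_neumann)
  qed
qed

lemma neumann_sum_fixpoint:
  assumes "t \<in> neumann_set" and "e \<in> E"
  shows "neumann_sum t e = 1 + t * mat_vec E M (neumann_sum t) e"
proof -
  have sm: "summable (\<lambda>k. t ^ k * pow_ones k g)" if "g \<in> E" for g
    using assms(1) that by (rule summable_neumann)
  have "(\<Sum>k. t ^ Suc k * pow_ones (Suc k) e) = (\<Sum>k. t * (\<Sum>g\<in>E. M e g * (t ^ k * pow_ones k g)))"
    by (simp add: pow_ones_Suc mat_vec_def sum_distrib_left algebra_simps)
  also have "\<dots> = t * (\<Sum>g\<in>E. \<Sum>k. M e g * (t ^ k * pow_ones k g))"
    using sm by (subst suminf_sum [symmetric]) (auto intro!: suminf_mult summable_mult summable_sum)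
  also have "\<dots> = t * mat_vec E M (neumann_sum t) e"
    using sm by (simp add: mat_vec_def neumann_sum_def suminf_mult)
  finally show ?thesis
    using suminf_split_head[OF sm[OF assms(2)]] by (simp add: neumann_sum_def)
qed

lemma neumann_sum_ge_one:
  assumes "t \<in> neumann_set" and "e \<in> E"
  shows "1 \<le> neumann_sum t e"
proof -
  have "0 \<le> t"
    using assms(1) by (simp add: neumann_set_def)
  then have "0 \<le> t * mat_vec E M (neumann_sum t) e"
    using assms(1) by (simp add: mat_vec_nonneg neumann_sum_nonneg)
  then show ?thesis
    using neumann_sum_fixpoint[OF assms] by simp
qed

(* S = neumann_sum t satisfies (t + \<delta>) M S \<le> S - 1/2 \<le> (1 - 1/(2m)) S for small \<delta>,
   so it is a strictly subinvariant vector for t + \<delta>. *)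
lemma neumann_set_extends:
  assumes "t \<in> neumann_set"
  shows "\<exists>t'>t. t' \<in> neumann_set"
proof -
  define S where "S = neumann_sum t"
  define m where "m = 1 + (\<Sum>e\<in>E. S e)"
  define C where "C = (\<Sum>e\<in>E. mat_vec E M S e)"
  define \<delta> where "\<delta> = 1 / (2 * (C + 1))"
  define q where "q = 1 - 1 / (2 * m)"
  have S_ge_1: "1 \<le> S e" if "e \<in> E" for e
    unfolding S_def using assms that by (rule neumann_sum_ge_one)
  have S_le_m: "S e \<le> m" if "e \<in> E" for e
  proof -
    have "S e \<le> (\<Sum>e\<in>E. S e)"
      using S_ge_1 that finite_index by (intro member_le_sum) force+
    then show ?thesis
      by (simp add: m_def)
  qed
  have m_ge_1: "1 \<le> m"
    unfolding m_def using S_ge_1 by (smt (verit) sum_nonneg)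
  have MS_nonneg: "0 \<le> mat_vec E M S e" for e
    using S_ge_1 by (intro mat_vec_nonneg) force
  have MS_le_C: "mat_vec E M S e \<le> C" if "e \<in> E" for e
    unfolding C_def using that finite_index MS_nonneg by (intro member_le_sum) auto
  have C_nonneg: "0 \<le> C"
    unfolding C_def by (intro sum_nonneg MS_nonneg)
  have "t + \<delta> \<in> neumann_set"
  proof (rule neumann_setI)
    show "0 \<le> t + \<delta>"
      using assms C_nonneg by (simp add: neumann_set_def \<delta>_def)
    show "0 \<le> q" "q < 1"
      using m_ge_1 by (simp_all add: q_def)
    fix e assume e: "e \<in> E"
    show "1 \<le> S e"
      using e by (rule S_ge_1)
    have "\<delta> * mat_vec E M S e \<le> \<delta> * C"
      using MS_le_C[OF e] C_nonneg by (simp add: \<delta>_def divide_right_mono)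
    also have "\<dots> \<le> 1 / 2"
      using C_nonneg by (simp add: \<delta>_def field_simps)
    finally have "(t + \<delta>) * mat_vec E M S e \<le> S e - 1 / 2"
      using neumann_sum_fixpoint[OF assms e] by (simp add: S_def algebra_simps)
    also have "\<dots> \<le> q * S e"
      using S_le_m[OF e] m_ge_1 by (simp add: q_def field_simps)
    finally show "(t + \<delta>) * mat_vec E M S e \<le> q * S e" .
  qed
  moreover have "t < t + \<delta>"
    using C_nonneg by (simp add: \<delta>_def)
  ultimately show ?thesis
    by blast
qed

(* Apply the left inverse B of I - t0 M to S - t0 M S = 1 - (t0 - t) M S, where S = neumann_sum t. *)
lemma neumann_sum_total_bound:
  fixes K \<rho> :: real
  assumes inv: "\<forall>e\<in>E. \<forall>g\<in>E.
      (\<Sum>f\<in>E. B e f * ((if f = g then 1 else 0) - t0 * M f g)) = (if e = g then 1 else 0)"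
    and B_row: "\<And>e. e \<in> E \<Longrightarrow> (\<Sum>f\<in>E. \<bar>B e f\<bar>) \<le> K"
    and M_row: "\<And>f. f \<in> E \<Longrightarrow> (\<Sum>g\<in>E. M f g) \<le> \<rho>"
    and t: "t \<in> neumann_set" "t \<le> t0"
  shows "(\<Sum>e\<in>E. neumann_sum t e) \<le> card E * K * (1 + (t0 - t) * \<rho> * (\<Sum>e\<in>E. neumann_sum t e))"
proof -
  define S where "S = neumann_sum t"
  define \<sigma> where "\<sigma> = (\<Sum>e\<in>E. S e)"
  have S_nonneg: "0 \<le> S e" if "e \<in> E" for e
    unfolding S_def using t(1) that by (rule neumann_sum_nonneg)
  have \<sigma>_nonneg: "0 \<le> \<sigma>"
    unfolding \<sigma>_def by (intro sum_nonneg S_nonneg)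
  have residual: "\<bar>S f - t0 * mat_vec E M S f\<bar> \<le> 1 + (t0 - t) * \<rho> * \<sigma>" if f: "f \<in> E" for f
  proof -
    have "mat_vec E M S f \<le> (\<Sum>g\<in>E. M f g * \<sigma>)"
      unfolding mat_vec_def \<sigma>_def using finite_index S_nonneg
      by (intro sum_mono mult_left_mono member_le_sum nonneg_entries) auto
    also have "\<dots> \<le> \<rho> * \<sigma>"
      using M_row[OF f] \<sigma>_nonneg by (simp add: sum_distrib_right[symmetric] mult_right_mono)
    finally have "(t0 - t) * mat_vec E M S f \<le> (t0 - t) * \<rho> * \<sigma>"
      using t(2) by (metis diff_ge_0_iff_ge mult.assoc mult_left_mono)
    moreover have "0 \<le> (t0 - t) * mat_vec E M S f"
      using t(2) S_nonneg by (simp add: mat_vec_nonneg)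
    moreover have "S f - t0 * mat_vec E M S f = 1 - (t0 - t) * mat_vec E M S f"
      using neumann_sum_fixpoint[OF t(1) f] by (simp add: S_def algebra_simps)
    ultimately show ?thesis
      by linarith
  qed
  have S_le: "S e \<le> K * (1 + (t0 - t) * \<rho> * \<sigma>)" if e: "e \<in> E" for e
  proof -
    have "S e = (\<Sum>f\<in>E. B e f * (S f - t0 * mat_vec E M S f))"
      using left_inverse_mat_vec[OF finite_index e inv, of S]
      by (simp add: mat_vec_id_minus[OF finite_index] cong: sum.cong)
    also have "\<dots> \<le> (\<Sum>f\<in>E. \<bar>B e f\<bar> * (1 + (t0 - t) * \<rho> * \<sigma>))"
    proof (rule sum_mono)
      fix f assume "f \<in> E"
      have "B e f * (S f - t0 * mat_vec E M S f) \<le> \<bar>B e f\<bar> * \<bar>S f - t0 * mat_vec E M S f\<bar>"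
        by (metis abs_ge_self abs_mult)
      also have "\<dots> \<le> \<bar>B e f\<bar> * (1 + (t0 - t) * \<rho> * \<sigma>)"
        using residual[OF \<open>f \<in> E\<close>] by (simp add: mult_left_mono)
      finally show "B e f * (S f - t0 * mat_vec E M S f) \<le> \<bar>B e f\<bar> * (1 + (t0 - t) * \<rho> * \<sigma>)" .
    qed
    also have "\<dots> \<le> K * (1 + (t0 - t) * \<rho> * \<sigma>)"
      using B_row[OF e] residual[OF e] abs_ge_zero[of "S e - t0 * mat_vec E M S e"]
      by (simp add: sum_distrib_right[symmetric] mult_right_mono)
    finally show ?thesis .
  qed
  have "(\<Sum>e\<in>E. S e) \<le> (\<Sum>e\<in>E. K * (1 + (t0 - t) * \<rho> * \<sigma>))"
    by (intro sum_mono S_le)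
  then show ?thesis
    by (simp add: \<sigma>_def S_def)
qed

lemma neumann_sum_eventually_bounded:
  assumes "0 < t0" and below: "\<And>t. 0 < t \<Longrightarrow> t < t0 \<Longrightarrow> t \<in> neumann_set"
    and no_eigvec: "\<And>v. \<forall>e\<in>E. t0 * mat_vec E M v e = v e \<Longrightarrow> \<forall>e\<in>E. v e = 0"
  shows "\<exists>R. \<forall>\<^sub>F t in at_left t0. t \<in> neumann_set \<and> (\<forall>e\<in>E. neumann_sum t e \<le> R)"
proof -
  have "\<forall>e\<in>E. v e = 0"
    if "\<forall>e\<in>E. mat_vec E (\<lambda>f g. (if f = g then 1 else 0) - t0 * M f g) v e = 0" for v
    using that no_eigvec[of v] by (simp add: mat_vec_id_minus[OF finite_index])
  then obtain B where inv: "\<forall>e\<in>E. \<forall>g\<in>E.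
      (\<Sum>f\<in>E. B e f * ((if f = g then 1 else 0) - t0 * M f g)) = (if e = g then 1 else 0)"
    using finite_matrix_left_inverse[OF finite_index] by blast
  define K where "K = (\<Sum>e\<in>E. \<Sum>f\<in>E. \<bar>B e f\<bar>)"
  define \<rho> where "\<rho> = (\<Sum>f\<in>E. \<Sum>g\<in>E. M f g)"
  define n where "n = real (card E)"
  have B_row: "(\<Sum>f\<in>E. \<bar>B e f\<bar>) \<le> K" if "e \<in> E" for e
    unfolding K_def using finite_index that by (intro member_le_sum sum_nonneg) auto
  have M_row: "(\<Sum>g\<in>E. M f g) \<le> \<rho>" if "f \<in> E" for f
    unfolding \<rho>_def using finite_index that by (intro member_le_sum sum_nonneg nonneg_entries)
  have "((\<lambda>t. n * K * \<rho> * (t0 - t)) \<longlongrightarrow> 0) (at_left t0)"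
    by (intro tendsto_eq_intros) auto
  then have "\<forall>\<^sub>F t in at_left t0. n * K * \<rho> * (t0 - t) < 1 / 2"
    by (rule order_tendstoD) simp
  moreover have "\<forall>\<^sub>F t in at_left t0. 0 < t \<and> t < t0"
    using eventually_at_left_real[OF \<open>0 < t0\<close>] by simp
  ultimately have "\<forall>\<^sub>F t in at_left t0. t \<in> neumann_set \<and> (\<forall>e\<in>E. neumann_sum t e \<le> 2 * n * K)"
  proof eventually_elim
    case (elim t)
    then have t_mem: "t \<in> neumann_set"
      using below by blast
    define \<sigma> where "\<sigma> = (\<Sum>e\<in>E. neumann_sum t e)"
    have "\<sigma> \<le> n * K * (1 + (t0 - t) * \<rho> * \<sigma>)"
      unfolding \<sigma>_def n_def using neumann_sum_total_bound[OF inv B_row M_row t_mem] elim by simp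
    moreover have "0 \<le> \<sigma>"
      unfolding \<sigma>_def using t_mem by (intro sum_nonneg neumann_sum_nonneg)
    ultimately have "\<sigma> \<le> 2 * n * K"
      using elim mult_right_mono[of "n * K * \<rho> * (t0 - t)" "1 / 2" \<sigma>] by (simp add: algebra_simps)
    moreover have "neumann_sum t e \<le> \<sigma>" if "e \<in> E" for e
      unfolding \<sigma>_def using finite_index t_mem that by (intro member_le_sum neumann_sum_nonneg) auto
    ultimately show ?case
      using t_mem by fastforce
  qed
  then show ?thesis
    by blast
qed

lemma neumann_set_closed_from_below:
  assumes "0 < t0" and "\<And>t. 0 < t \<Longrightarrow> t < t0 \<Longrightarrow> t \<in> neumann_set"
    and "\<And>v. \<forall>e\<in>E. t0 * mat_vec E M v e = v e \<Longrightarrow> \<forall>e\<in>E. v e = 0"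
  shows "t0 \<in> neumann_set"
proof -
  obtain R where R: "\<forall>\<^sub>F t in at_left t0. t \<in> neumann_set \<and> (\<forall>e\<in>E. neumann_sum t e \<le> R)"
    using neumann_sum_eventually_bounded[OF assms] by blast
  have "(\<Sum>k<N. t0 ^ k * pow_ones k e) \<le> R" if "e \<in> E" for N e
  proof (rule tendsto_upperbound[OF _ _ trivial_limit_at_left_real])
    show "((\<lambda>t. \<Sum>k<N. t ^ k * pow_ones k e) \<longlongrightarrow> (\<Sum>k<N. t0 ^ k * pow_ones k e)) (at_left t0)"
      by (intro tendsto_intros)
    show "\<forall>\<^sub>F t in at_left t0. (\<Sum>k<N. t ^ k * pow_ones k e) \<le> R"
      using R
    proof eventually_elim
      case (elim t)
      then have "(\<Sum>k<N. t ^ k * pow_ones k e) \<le> neumann_sum t e"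
        unfolding neumann_sum_def using \<open>e \<in> E\<close>
        by (intro sum_le_suminf summable_neumann)
          (auto intro!: mult_nonneg_nonneg pow_ones_nonneg simp: neumann_set_def)
      then show ?case
        using elim \<open>e \<in> E\<close> by fastforce
    qed
  qed
  then show ?thesis
    unfolding neumann_set_def using \<open>0 < t0\<close>
    by (auto intro!: summableI_nonneg_bounded mult_nonneg_nonneg pow_ones_nonneg)
qed

lemma neumann_set_contains:
  assumes "0 < b"
    and no_eigvec: "\<And>t v. 0 < t \<Longrightarrow> t \<le> b \<Longrightarrow> \<forall>e\<in>E. t * mat_vec E M v e = v e \<Longrightarrow> \<forall>e\<in>E. v e = 0"
  shows "b \<in> neumann_set"
proof (rule ccontr)
  assume b_notin: "b \<notin> neumann_set"
  have "0 \<in> neumann_set"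
    by (rule neumann_setI[where v = "\<lambda>_. 1" and q = 0]) auto
  then obtain t1 where "0 < t1" "t1 \<in> neumann_set"
    using neumann_set_extends by blast
  have le_b: "t \<le> b" if "t \<in> neumann_set" for t
  proof (rule ccontr)
    assume "\<not> t \<le> b"
    then have "b \<in> neumann_set"
      using neumann_set_downward[OF that, of b] \<open>0 < b\<close> by simp
    with b_notin show False
      by simp
  qed
  then have bdd: "bdd_above neumann_set"
    by (rule bdd_aboveI)
  define t0 where "t0 = Sup neumann_set"
  have t0_pos: "0 < t0"
    using cSup_upper[OF \<open>t1 \<in> neumann_set\<close> bdd] \<open>0 < t1\<close> by (simp add: t0_def)
  have t0_le_b: "t0 \<le> b"
    unfolding t0_def using \<open>t1 \<in> neumann_set\<close> le_b by (intro cSup_least) auto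
  have below: "t \<in> neumann_set" if "0 < t" "t < t0" for t
  proof -
    obtain s where "s \<in> neumann_set" "t < s"
      using less_cSup_iff[OF _ bdd, of t] \<open>t1 \<in> neumann_set\<close> \<open>t < t0\<close> unfolding t0_def by blast
    then show ?thesis
      using neumann_set_downward[of s t] \<open>0 < t\<close> by simp
  qed
  have "t0 \<in> neumann_set"
    using t0_pos below no_eigvec[OF t0_pos t0_le_b] by (rule neumann_set_closed_from_below)
  then obtain t' where "t0 < t'" "t' \<in> neumann_set"
    using neumann_set_extends by blast
  moreover have "t' \<le> t0"
    unfolding t0_def using \<open>t' \<in> neumann_set\<close> bdd by (rule cSup_upper)
  ultimately show False
    by simp
qed

end

context
  fixes c :: "nat \<Rightarrow> real" and b :: real and f :: "real \<Rightarrow> real"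
  assumes coeff_nonneg: "\<And>n. 0 \<le> c n" and summable_at: "summable (\<lambda>n. c n * b ^ n)"
    and f_eq: "\<And>x. \<bar>x\<bar> < b \<Longrightarrow> f x = exp (\<Sum>n. c n * x ^ n)"
begin

lemma exp_powser_DERIV:
  assumes "\<bar>x\<bar> < b"
  shows "(f has_real_derivative f x * (\<Sum>n. diffs c n * x ^ n)) (at x)"
proof (rule has_field_derivative_transform_within_open[where S = "{-b<..<b}"])
  show "((\<lambda>x. exp (\<Sum>n. c n * x ^ n)) has_real_derivative f x * (\<Sum>n. diffs c n * x ^ n)) (at x)"
    using assms f_eq[OF assms]
    by (auto intro!: DERIV_chain2[OF DERIV_exp] termdiffs_strong[OF summable_at])
qed (use assms f_eq in auto)

lemma exp_powser_isCont: "\<bar>x\<bar> < b \<Longrightarrow> isCont f x"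
  using exp_powser_DERIV by (rule DERIV_isCont)

lemma exp_powser_mono:
  assumes "0 \<le> x" "x \<le> y" "y < b"
  shows "f x \<le> f y"
proof -
  have "(\<Sum>n. c n * x ^ n) \<le> (\<Sum>n. c n * y ^ n)"
    using assms
    by (intro suminf_le powser_inside[OF summable_at]) (auto intro!: mult_left_mono power_mono coeff_nonneg)
  then show ?thesis
    using assms f_eq by simp
qed

lemma exp_powser_deriv_nonneg:
  assumes "0 \<le> x" "x < b"
  shows "0 \<le> deriv f x"
proof -
  have "0 \<le> (\<Sum>n. diffs c n * x ^ n)"
    using assms
    by (intro suminf_nonneg termdiff_converges[where K = b] powser_inside[OF summable_at])
      (auto simp: diffs_def coeff_nonneg)
  moreover have "0 < f x"
    using assms f_eq by simp
  ultimately show ?thesis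
    using DERIV_imp_deriv[OF exp_powser_DERIV] assms by simp
qed

end

lemma exists_interior_maximum:
  fixes s :: "real \<Rightarrow> real"
  assumes "continuous_on {0..1} s" and "s 0 = 0" "s 1 = 0" and "p \<in> {0..1}" "0 < s p"
  shows "\<exists>c\<in>{0<..<1}. \<forall>p\<in>{0..1}. s p \<le> s c"
proof -
  obtain c where c: "c \<in> {0..1}" "\<forall>p\<in>{0..1}. s p \<le> s c"
    using continuous_attains_sup[OF compact_Icc _ assms(1)] by auto
  then have "c \<noteq> 0" "c \<noteq> 1"
    using assms(2-5) by fastforce+
  with c show ?thesis
    by auto
qed

lemma nonneg_matrix_olg_T: "finite E \<Longrightarrow> nonneg_matrix E olg_T"
  by unfold_locales (simp_all add: olg_T_def)

lemma olg_Tpow_nonneg: "0 \<le> olg_Tpow E k e f"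
  by (induction k arbitrary: e) (auto intro!: sum_nonneg mult_nonneg_nonneg simp: olg_T_def)

lemma trace_Tpow_nonneg: "0 \<le> trace_Tpow E k"
  unfolding trace_Tpow_def by (intro sum_nonneg olg_Tpow_nonneg)

lemma olg_Tpow_row_sum:
  assumes "finite E" and "e \<in> E"
  shows "(\<Sum>f\<in>E. olg_Tpow E k e f) = nonneg_matrix.pow_ones E olg_T k e"
proof -
  interpret nonneg_matrix E olg_T
    using assms(1) by (rule nonneg_matrix_olg_T)
  show ?thesis
    using assms(2)
  proof (induction k arbitrary: e)
    case 0
    then show ?case
      using assms(1) by simp
  next
    case (Suc k)
    have "(\<Sum>f\<in>E. olg_Tpow E (Suc k) e f) = (\<Sum>f\<in>E. \<Sum>g\<in>E. olg_T e g * olg_Tpow E k g f)"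
      by simp
    also have "\<dots> = (\<Sum>g\<in>E. olg_T e g * (\<Sum>f\<in>E. olg_Tpow E k g f))"
      unfolding sum_distrib_left by (rule sum.swap)
    also have "\<dots> = pow_ones (Suc k) e"
      using Suc.IH by (simp add: pow_ones_Suc mat_vec_def)
    finally show ?case .
  qed
qed

lemma summable_ihara_coeffs:
  assumes "finite E" and "b \<in> nonneg_matrix.neumann_set E olg_T"
  shows "summable (\<lambda>n. trace_Tpow E n / real n * b ^ n)"
proof -
  interpret nonneg_matrix E olg_T
    using assms(1) by (rule nonneg_matrix_olg_T)
  have "0 \<le> b"
    using assms(2) by (simp add: neumann_set_def)
  have bound: "\<bar>trace_Tpow E n / real n * b ^ n\<bar> \<le> (\<Sum>e\<in>E. b ^ n * pow_ones n e)" for n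
  proof -
    have coeff_le: "trace_Tpow E n / real n \<le> trace_Tpow E n"
      using trace_Tpow_nonneg[of E n] by (cases n) (simp_all add: divide_le_eq mult_le_cancel_left1)
    have "\<bar>trace_Tpow E n / real n * b ^ n\<bar> \<le> trace_Tpow E n * b ^ n"
      using mult_right_mono[OF coeff_le zero_le_power[OF \<open>0 \<le> b\<close>, of n]] trace_Tpow_nonneg[of E n] \<open>0 \<le> b\<close>
      by (simp add: abs_mult)
    also have "\<dots> = (\<Sum>e\<in>E. b ^ n * olg_Tpow E n e e)"
      by (simp add: trace_Tpow_def sum_distrib_left mult.commute)
    also have "\<dots> \<le> (\<Sum>e\<in>E. b ^ n * pow_ones n e)"
      using assms(1) \<open>0 \<le> b\<close>
      by (intro sum_mono mult_left_mono) (auto simp flip: olg_Tpow_row_sum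
          intro!: member_le_sum olg_Tpow_nonneg)
    finally show ?thesis .
  qed
  have "summable (\<lambda>n. \<Sum>e\<in>E. b ^ n * pow_ones n e)"
    using assms(2) by (intro summable_sum summable_neumann)
  then show ?thesis
    by (rule summable_comparison_test'[where N = 0]) (simp only: real_norm_def bound)
qed

lemma ihara_zeta_eq_exp_powser:
  assumes "summable (\<lambda>n. trace_Tpow E n / real n * b ^ n)" and "\<bar>x\<bar> < b"
  shows "ihara_zeta E x = exp (\<Sum>n. trace_Tpow E n / real n * x ^ n)"
  using suminf_split_head[OF powser_inside[OF assms(1)]] assms(2) by (simp add: ihara_zeta_def)

lemma olg_T_no_eigvec:
  assumes "largest_eigenvalue E lam" and "0 < t" "t * lam < 1"
    and eig: "\<forall>e\<in>E. t * mat_vec E olg_T v e = v e"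
  shows "\<forall>e\<in>E. v e = 0"
proof (rule ccontr)
  assume "\<not> (\<forall>e\<in>E. v e = 0)"
  then obtain e0 where "e0 \<in> E" "v e0 \<noteq> 0"
    by blast
  have "T_eigenvalue E (of_real (1 / t))"
    unfolding T_eigenvalue_def
  proof (intro exI[of _ "\<lambda>e. complex_of_real (v e)"] conjI bexI[OF _ \<open>e0 \<in> E\<close>] ballI)
    show "complex_of_real (v e0) \<noteq> 0"
      using \<open>v e0 \<noteq> 0\<close> by simp
    fix e assume "e \<in> E"
    then have "(\<Sum>f\<in>E. olg_T e f * v f) = 1 / t * v e"
      using eig \<open>0 < t\<close> by (simp add: mat_vec_def field_simps)
    then have "complex_of_real (\<Sum>f\<in>E. olg_T e f * v f) = complex_of_real (1 / t * v e)"
      by (rule arg_cong)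
    then show "(\<Sum>f\<in>E. complex_of_real (olg_T e f) * complex_of_real (v f))
        = complex_of_real (1 / t) * complex_of_real (v e)"
      by simp
  qed
  then have "1 / t \<le> lam"
    using assms(1) by (simp add: largest_eigenvalue_def)
  with assms(2,3) show False
    by (simp add: field_simps)
qed

lemma olg_T_neumann_set_below:
  assumes "finite E" and "largest_eigenvalue E lam" and "0 < lam" and "0 < b" "b * lam < 1"
  shows "b \<in> nonneg_matrix.neumann_set E olg_T"
proof -
  interpret nonneg_matrix E olg_T
    using assms(1) by (rule nonneg_matrix_olg_T)
  show ?thesis
  proof (rule neumann_set_contains)
    fix t v assume "0 < t" "t \<le> b" "\<forall>e\<in>E. t * mat_vec E olg_T v e = v e"
    moreover have "t * lam < 1"
      using \<open>t \<le> b\<close> \<open>b * lam < 1\<close> \<open>0 < lam\<close> by (smt (verit) mult_right_mono)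
    ultimately show "\<forall>e\<in>E. v e = 0"
      using olg_T_no_eigvec[OF assms(2)] by blast
  qed (use \<open>0 < b\<close> in simp)
qed

theorem theorem1:
  fixes V :: "'a set" and E :: "('a \<times> 'a) set" and lam a :: real and s :: "real \<Rightarrow> real"
  assumes "admissible V E"
    and "largest_eigenvalue E lam" and "lam > 0"
    and "0 < a" and "a < 1 / lam"
    and "\<And>p. s p = p * (ihara_zeta E a + 1 - (ihara_zeta E (a * p) + p))
                     / (1 + a * deriv (ihara_zeta E) a)"
  shows "\<exists>c\<in>{0<..<1}. \<forall>p\<in>{0..1}. s p \<le> s c"
proof -
  have "finite E"
    using assms(1) unfolding admissible_def simple_graph_def by (meson finite_SigmaI finite_subset)
  define b where "b = (a + 1 / lam) / 2"
  have "a < b" and "b * lam < 1"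
    using assms(3-5) by (auto simp: b_def field_simps)
  then have summable: "summable (\<lambda>n. trace_Tpow E n / real n * b ^ n)"
    using \<open>finite E\<close> assms(2,3,4)
    by (intro summable_ihara_coeffs olg_T_neumann_set_below) auto
  have coeff_nonneg: "0 \<le> trace_Tpow E n / real n" for n
    by (simp add: trace_Tpow_nonneg)
  note zeta_eq = ihara_zeta_eq_exp_powser[OF summable]
  define D where "D = 1 + a * deriv (ihara_zeta E) a"
  have "1 \<le> D"
    using exp_powser_deriv_nonneg[OF coeff_nonneg summable zeta_eq, of a] \<open>0 < a\<close> \<open>a < b\<close>
    by (simp add: D_def)
  have s_eq: "s = (\<lambda>p. p * (ihara_zeta E a + 1 - (ihara_zeta E (a * p) + p)) / D)"
    using assms(6) by (simp add: D_def fun_eq_iff)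
  have "isCont (\<lambda>p. ihara_zeta E (a * p)) p" if "p \<in> {0..1}" for p
  proof (intro isCont_o2[OF _ exp_powser_isCont[OF coeff_nonneg summable zeta_eq]])
    have "0 \<le> a * p" "a * p \<le> a"
      using that \<open>0 < a\<close> by (simp_all add: mult_left_le)
    then show "\<bar>a * p\<bar> < b"
      using \<open>a < b\<close> by linarith
  qed simp
  then have "continuous_on {0..1} s"
    unfolding s_eq using \<open>1 \<le> D\<close> by (intro continuous_at_imp_continuous_on continuous_intros) auto
  moreover have "0 < s (1 / 2)"
    using exp_powser_mono[OF coeff_nonneg summable zeta_eq, of "a / 2" a] \<open>0 < a\<close> \<open>a < b\<close> \<open>1 \<le> D\<close>
    by (simp add: s_eq)
  moreover have "s 0 = 0" "s 1 = 0"
    by (simp_all add: s_eq)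
  ultimately show ?thesis
    by (intro exists_interior_maximum[where p = "1 / 2"]) auto
qed

end
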